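(* As formal power series in $q$ with coefficients Laurent polynomials in $z$, \[ (1-z)(1-z^{-1})\,\overline{S2}(z,q)=\sum_{n=0}^\infty\sum_{m=-\infty}^\infty\bigl(N2(m,n)-M2(m,n)\bigr)z^mq^n . \]
   Context: Notation: $(a;q)_\infty=\prod_{k\ge0}(1-aq^k)$, $(a;q)_n=(a;q)_\infty/(aq^n;q)_\infty$. Define \[ \overline{S2}(z,q)=\sum_{n=1}^\infty\frac{q^{2n}(q^{2n+2};q^2)_\infty(-q^{2n+1};q^2)_\infty}{(zq^{2n};q^2)_\infty(z^{-1}q^{2n};q^2)_\infty}. \] The numbers $N2(m,n)$ (number of partitions of $n$ without repeated odd parts having $M_2$-rank $m$, where the $M_2$-rank of $\pi$ is $\lceil \ell(\pi)/2\rceil-\#(\pi)$ with $\ell(\pi)$ the largest part and $\#(\pi)$ the number of parts) are given by \[ \sum_{n\ge0}\sum_mN2(m,n)z^mq^n=\sum_{n=0}^\infty\frac{q^{n^2}(-q;q^2)_n}{(zq^2;q^2)_n(z^{-1}q^2;q^2)_n}, \] and the numbers $M2(m,n)$ are defined by \[ \sum_{n\ge0}\sum_mM2(m,n)z^mq^n=\frac{(-q;q^2)_\infty(q^2;q^2)_\infty}{(zq^2;q^2)_\infty(z^{-1}q^2;q^2)_\infty}. \] *)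

theory Defs
  imports "HOL-Computational_Algebra.Formal_Laurent_Series" "HOL-Library.Multiset"
begin

text \<open>Ambient ring: formal power series in q whose coefficients are formal Laurent
  series in z (over the rationals).  Limits are taken in the q-adic
  topology of the fps type.\<close>

type_synonym ser = "rat fls fps"

definition zz :: ser where "zz = fps_const fls_X"
definition zinv :: ser where "zinv = fps_const fls_X_inv"
definition qq :: ser where "qq = fps_X"

definition qpoch :: "ser \<Rightarrow> ser \<Rightarrow> nat \<Rightarrow> ser" where
  "qpoch a b n = (\<Prod>k<n. 1 - a * b ^ k)"

definition qpoch_inf :: "ser \<Rightarrow> ser \<Rightarrow> ser" where
  "qpoch_inf a b = lim (\<lambda>N. qpoch a b N)"

definition S2bar :: ser where
  "S2bar = (\<Sum>n. (let k = Suc n in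
      qq ^ (2*k) * qpoch_inf (qq ^ (2*k+2)) (qq^2) * qpoch_inf (- (qq ^ (2*k+1))) (qq^2)
      / (qpoch_inf (zz * qq ^ (2*k)) (qq^2) * qpoch_inf (zinv * qq ^ (2*k)) (qq^2))))"

definition is_partition :: "nat multiset \<Rightarrow> nat \<Rightarrow> bool" where
  "is_partition p n \<longleftrightarrow> (\<forall>x\<in>#p. 0 < x) \<and> sum_mset p = n"

definition no_rep_odd :: "nat multiset \<Rightarrow> bool" where
  "no_rep_odd p \<longleftrightarrow> (\<forall>x. odd x \<longrightarrow> count p x \<le> 1)"

definition largest_part :: "nat multiset \<Rightarrow> nat" where
  "largest_part p = (if p = {#} then 0 else Max (set_mset p))"

definition M2rank :: "nat multiset \<Rightarrow> int" where
  "M2rank p = \<lceil>real (largest_part p) / 2\<rceil> - int (size p)"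

definition N2 :: "int \<Rightarrow> nat \<Rightarrow> nat" where
  "N2 m n = card {p. is_partition p n \<and> no_rep_odd p \<and> M2rank p = m}"

definition M2gf :: ser where
  "M2gf = qpoch_inf (- qq) (qq^2) * qpoch_inf (qq^2) (qq^2)
          / (qpoch_inf (zz * qq^2) (qq^2) * qpoch_inf (zinv * qq^2) (qq^2))"

definition M2 :: "int \<Rightarrow> nat \<Rightarrow> rat" where
  "M2 m n = fls_nth (fps_nth M2gf n) m"

end

(* All identities are proved q-adically: two series are equal as soon as they agree below q^n
   for every n, and both infinite products and series whose k-th term is O(q^k) stabilise
   coefficientwise.  Write (a)_k for (a;q^2)_k and let G_m = (-q/z)_m / (q^2/z)_m, the generating
   function, with weight z^(-number of parts), of partitions without repeated odd parts and with
   all parts at most 2m.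

   Splitting (a)_inf = (a)_k (a q^(2k))_inf, the factor (1 - z)(1 - 1/z) turns the k-th term of
   S2bar into (1 - z) kappa (1/z)_k q^(2k) / (q^2)_k times (-q^(2k+1))_inf / (z q^(2k))_inf, where
   kappa = (q^2)_inf / (q^2/z)_inf.  Expanding the last quotient by the q-binomial theorem in powers
   of q^(2k), interchanging the sums over k >= 1 and m, and summing over k by the q-binomial theorem
   again (Heine's argument) gives (1 - z) Sum_m (z^m G_m - kappa c_m) with
   c_m = (-q/z)_m z^m / (q^2)_m.

   Grouping partitions by ceil(largest part / 2) shows that the generating function of N2 is the
   limit of z^N G_N + (1 - z) Sum_{m<N} z^m G_m.  What is left over is the divergent series
   (1 - z) kappa Sum_m c_m; the q-binomial recurrence at y = z rewrites its partial sums as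
   (1 + q) kappa times those of a convergent q-binomial series at y = z q^2, and by the q-binomial
   theorem this limit is M2gf. *)

theory Submission
  imports Defs
begin

section \<open>Agreement of power series below a given order\<close>

definition eq_upto :: "nat \<Rightarrow> 'a::zero fps \<Rightarrow> 'a fps \<Rightarrow> bool" where
  "eq_upto n f g \<longleftrightarrow> (\<forall>i<n. f $ i = g $ i)"

abbreviation vanishes_below :: "nat \<Rightarrow> 'a::zero fps \<Rightarrow> bool" where
  "vanishes_below n f \<equiv> eq_upto n f 0"

lemma eq_upto_refl [simp]: "eq_upto n f f"
  by (simp add: eq_upto_def)

lemma eq_upto_0 [simp]: "eq_upto 0 f g"
  by (simp add: eq_upto_def)

lemma eq_upto_sym: "eq_upto n f g \<Longrightarrow> eq_upto n g f"
  by (simp add: eq_upto_def)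

lemma eq_upto_trans [trans]: "eq_upto n f g \<Longrightarrow> eq_upto n g h \<Longrightarrow> eq_upto n f h"
  by (simp add: eq_upto_def)

lemma eq_upto_mono: "eq_upto n f g \<Longrightarrow> m \<le> n \<Longrightarrow> eq_upto m f g"
  by (simp add: eq_upto_def)

lemma fps_eq_if_eq_upto: "(\<And>n. eq_upto n f g) \<Longrightarrow> f = g"
  by (auto simp: eq_upto_def intro: fps_ext)

lemma eq_upto_add: "eq_upto n f g \<Longrightarrow> eq_upto n f' g' \<Longrightarrow> eq_upto n (f + f') (g + g')"
  by (simp add: eq_upto_def)

lemma eq_upto_diff:
  fixes f g :: "'a::ab_group_add fps"
  shows "eq_upto n f g \<Longrightarrow> eq_upto n f' g' \<Longrightarrow> eq_upto n (f - f') (g - g')"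
  by (simp add: eq_upto_def)

lemma eq_upto_mult:
  fixes f g :: "'a::comm_ring_1 fps"
  shows "eq_upto n f g \<Longrightarrow> eq_upto n f' g' \<Longrightarrow> eq_upto n (f * f') (g * g')"
  unfolding eq_upto_def fps_mult_nth by (auto intro!: sum.cong)

lemma eq_upto_mult_left:
  fixes f g :: "'a::comm_ring_1 fps"
  shows "eq_upto n f g \<Longrightarrow> eq_upto n (h * f) (h * g)"
  by (rule eq_upto_mult) auto

lemma vanishes_below_mult_left:
  fixes f :: "'a::comm_ring_1 fps"
  shows "vanishes_below n f \<Longrightarrow> vanishes_below n (h * f)"
  using eq_upto_mult_left[of n f 0 h] by simp

lemma vanishes_below_mult_right:
  fixes f :: "'a::comm_ring_1 fps"
  shows "vanishes_below n f \<Longrightarrow> vanishes_below n (f * h)"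
  using vanishes_below_mult_left[of n f h] by (simp add: mult.commute)

lemma eq_upto_sum:
  "(\<And>x. x \<in> A \<Longrightarrow> eq_upto n (f x) (g x)) \<Longrightarrow> eq_upto n (sum f A) (sum g A)"
  by (simp add: eq_upto_def fps_sum_nth)

lemma eq_upto_prod:
  fixes f g :: "'b \<Rightarrow> 'a::comm_ring_1 fps"
  shows "(\<And>x. x \<in> A \<Longrightarrow> eq_upto n (f x) (g x)) \<Longrightarrow> eq_upto n (prod f A) (prod g A)"
  by (induction A rule: infinite_finite_induct) (auto intro: eq_upto_mult)

lemma vanishes_below_mult:
  fixes f g :: "'a::comm_ring_1 fps"
  assumes f: "vanishes_below a f" and g: "vanishes_below b g"
  shows "vanishes_below (a + b) (f * g)"
  unfolding eq_upto_def fps_mult_nth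
proof (intro allI impI)
  fix i assume "i < a + b"
  then have "f $ j * g $ (i - j) = 0" if "j \<le> i" for j
    using f g that by (cases "j < a") (auto simp: eq_upto_def)
  then show "(\<Sum>j = 0..i. f $ j * g $ (i - j)) = 0 $ i"
    by simp
qed

lemma vanishes_below_power:
  fixes f :: "'a::comm_ring_1 fps"
  assumes "vanishes_below a f"
  shows "vanishes_below (a * k) (f ^ k)"
proof (induction k)
  case (Suc k)
  then show ?case
    using vanishes_below_mult[OF assms Suc.IH] by (simp add: algebra_simps)
qed simp

lemma vanishes_below_power_self:
  fixes f :: "'a::comm_ring_1 fps"
  shows "f $ 0 = 0 \<Longrightarrow> vanishes_below k (f ^ k)"
  using vanishes_below_power[of 1 f k] by (simp add: eq_upto_def)

lemma eq_upto_inverse: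
  fixes f g :: "'a::field fps"
  assumes f0: "f $ 0 \<noteq> 0" and fg: "eq_upto n f g"
  shows "eq_upto n (inverse f) (inverse g)"
proof (cases "n = 0")
  case False
  then have g0: "g $ 0 \<noteq> 0"
    using f0 fg by (simp add: eq_upto_def)
  have "inverse f * inverse g * (g - f) = inverse f * (inverse g * g) - inverse g * (inverse f * f)"
    by (simp add: algebra_simps)
  then have diff_eq: "inverse f - inverse g = inverse f * inverse g * (g - f)"
    using f0 g0 by (simp add: inverse_mult_eq_1)
  have "vanishes_below n (g - f)"
    using fg by (simp add: eq_upto_def)
  then have "vanishes_below n (inverse f - inverse g)"
    unfolding diff_eq by (rule vanishes_below_mult_left)
  then show ?thesis
    by (simp add: eq_upto_def)
qed simp

lemma eq_upto_divide:
  fixes f g :: "'a::field fps"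
  assumes g0: "g $ 0 \<noteq> 0" and "eq_upto n f f'" and gg: "eq_upto n g g'"
  shows "eq_upto n (f / g) (f' / g')"
proof (cases "n = 0")
  case False
  then have "g' $ 0 \<noteq> 0"
    using g0 gg by (simp add: eq_upto_def)
  then show ?thesis
    using g0 assms by (simp add: fps_divide_unit eq_upto_mult eq_upto_inverse)
qed simp

lemma tendsto_fps_stabilizing:
  fixes X :: "nat \<Rightarrow> 'a::comm_ring_1 fps"
  assumes stab: "\<And>n m. n \<le> m \<Longrightarrow> eq_upto n (X m) (X n)"
  shows "X \<longlonglongrightarrow> Abs_fps (\<lambda>i. X (Suc i) $ i)"
proof (rule tendsto_fpsI)
  fix i
  show "\<forall>\<^sub>F m in sequentially. X m $ i = Abs_fps (\<lambda>i. X (Suc i) $ i) $ i"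
    using eventually_ge_at_top[of "Suc i"]
    by eventually_elim (use stab in \<open>auto simp: eq_upto_def\<close>)
qed

lemma lim_fps_stabilizing:
  fixes X :: "nat \<Rightarrow> 'a::comm_ring_1 fps"
  assumes stab: "\<And>n m. n \<le> m \<Longrightarrow> eq_upto n (X m) (X n)"
  shows "eq_upto n (lim X) (X n)"
proof -
  have "X (Suc i) $ i = X n $ i" if "i < n" for i
    using stab[of "Suc i" n] that by (simp add: eq_upto_def)
  then show ?thesis
    using limI[OF tendsto_fps_stabilizing[OF stab]] by (simp add: eq_upto_def)
qed

lemma suminf_eq_upto:
  fixes f :: "nat \<Rightarrow> 'a::comm_ring_1 fps"
  assumes f: "\<And>k. vanishes_below k (f k)" and "n \<le> N"
  shows "eq_upto n (\<Sum>k. f k) (\<Sum>k<N. f k)"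
proof -
  have stab: "eq_upto n (\<Sum>k<m. f k) (\<Sum>k<n. f k)" if "n \<le> m" for n m
  proof -
    have "(\<Sum>k<m. f k) = (\<Sum>k<n. f k) + (\<Sum>k\<in>{n..<m}. f k)"
      using sum.atLeastLessThan_concat[of 0 n m f] that by (simp add: lessThan_atLeast0)
    moreover have "vanishes_below n (\<Sum>k\<in>{n..<m}. f k)"
      using f by (auto simp: eq_upto_def fps_sum_nth intro!: sum.neutral)
    ultimately show ?thesis
      by (simp add: eq_upto_def)
  qed
  have "eq_upto n (\<Sum>k. f k) (\<Sum>k<n. f k)"
    unfolding suminf_eq_lim by (rule lim_fps_stabilizing[OF stab])
  also have "eq_upto n (\<Sum>k<n. f k) (\<Sum>k<N. f k)"
    by (rule eq_upto_sym[OF stab[OF assms(2)]])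
  finally show ?thesis .
qed

lemma suminf_vanishes_below:
  fixes f :: "nat \<Rightarrow> 'a::comm_ring_1 fps"
  assumes "\<And>k. vanishes_below k (f k)" and "\<And>k. vanishes_below n (f k)"
  shows "vanishes_below n (\<Sum>k. f k)"
proof -
  have "eq_upto n (\<Sum>k. f k) (\<Sum>k<n. f k)"
    by (rule suminf_eq_upto[OF assms(1) order_refl])
  also have "eq_upto n (\<Sum>k<n. f k) (\<Sum>k<n. 0)"
    by (rule eq_upto_sum) (rule assms(2))
  finally show ?thesis
    by simp
qed

lemma suminf_fps_mult_left:
  fixes f :: "nat \<Rightarrow> 'a::comm_ring_1 fps"
  assumes f: "\<And>k. vanishes_below k (f k)"
  shows "c * (\<Sum>k. f k) = (\<Sum>k. c * f k)"
proof (rule fps_eq_if_eq_upto)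
  fix n
  have "eq_upto n (c * (\<Sum>k. f k)) (c * (\<Sum>k<n. f k))"
    by (intro eq_upto_mult_left suminf_eq_upto f) simp
  also have "c * (\<Sum>k<n. f k) = (\<Sum>k<n. c * f k)"
    by (rule sum_distrib_left)
  also have "eq_upto n \<dots> (\<Sum>k. c * f k)"
    by (intro eq_upto_sym[OF suminf_eq_upto] vanishes_below_mult_left f) simp
  finally show "eq_upto n (c * (\<Sum>k. f k)) (\<Sum>k. c * f k)" .
qed

lemma suminf_fps_split_head:
  fixes f :: "nat \<Rightarrow> 'a::comm_ring_1 fps"
  assumes f: "\<And>k. vanishes_below k (f k)"
  shows "(\<Sum>k. f k) = f 0 + (\<Sum>k. f (Suc k))"
proof (rule fps_eq_if_eq_upto)
  fix n
  have f_Suc: "vanishes_below k (f (Suc k))" for k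
    using eq_upto_mono[OF f[of "Suc k"]] by simp
  have "eq_upto n (\<Sum>k. f k) (\<Sum>k<Suc n. f k)"
    by (intro suminf_eq_upto f) simp
  also have "(\<Sum>k<Suc n. f k) = f 0 + (\<Sum>k<n. f (Suc k))"
    by (rule sum.lessThan_Suc_shift)
  also have "eq_upto n \<dots> (f 0 + (\<Sum>k. f (Suc k)))"
    by (intro eq_upto_add eq_upto_refl eq_upto_sym[OF suminf_eq_upto] f_Suc) simp
  finally show "eq_upto n (\<Sum>k. f k) (f 0 + (\<Sum>k. f (Suc k)))" .
qed

lemma suminf_fps_swap:
  fixes T :: "nat \<Rightarrow> nat \<Rightarrow> 'a::comm_ring_1 fps"
  assumes T: "\<And>n m. vanishes_below (n + m) (T n m)"
  shows "(\<Sum>n. \<Sum>m. T n m) = (\<Sum>m. \<Sum>n. T n m)"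
proof (rule fps_eq_if_eq_upto)
  fix K
  have T1: "vanishes_below m (T n m)" and T2: "vanishes_below n (T n m)" for n m
    using eq_upto_mono[OF T] by simp_all
  have rows: "vanishes_below n (\<Sum>m. T n m)" and cols: "vanishes_below m (\<Sum>n. T n m)" for n m
    by (intro suminf_vanishes_below T1 T2)+
  have "eq_upto K (\<Sum>n. \<Sum>m. T n m) (\<Sum>n<K. \<Sum>m. T n m)"
    by (intro suminf_eq_upto rows) simp
  also have "eq_upto K \<dots> (\<Sum>n<K. \<Sum>m<K. T n m)"
    by (intro eq_upto_sum suminf_eq_upto T1) simp
  also have "\<dots> = (\<Sum>m<K. \<Sum>n<K. T n m)"
    by (rule sum.swap)
  also have "eq_upto K \<dots> (\<Sum>m<K. \<Sum>n. T n m)"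
    by (intro eq_upto_sum eq_upto_sym[OF suminf_eq_upto] T2) simp
  also have "eq_upto K \<dots> (\<Sum>m. \<Sum>n. T n m)"
    by (intro eq_upto_sym[OF suminf_eq_upto] cols) simp
  finally show "eq_upto K (\<Sum>n. \<Sum>m. T n m) (\<Sum>m. \<Sum>n. T n m)" .
qed

section \<open>q-Pochhammer symbols\<close>

lemma qpoch_0 [simp]: "qpoch a b 0 = 1"
  by (simp add: qpoch_def)

lemma qpoch_Suc: "qpoch a b (Suc n) = qpoch a b n * (1 - a * b ^ n)"
  by (simp add: qpoch_def)

lemma qpoch_add: "qpoch a b (n + m) = qpoch a b n * qpoch (a * b ^ n) b m"
  by (induction m) (simp_all add: qpoch_Suc power_add mult_ac)

lemma qpoch_nth_0:
  assumes "b $ 0 = 0"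
  shows "qpoch a b n $ 0 = (if n = 0 then 1 else 1 - a $ 0)"
proof (induction n)
  case (Suc n)
  have "(a * b ^ n) $ 0 = (if n = 0 then a $ 0 else 0)"
    using assms by (cases n) (simp_all add: fps_mult_nth_0)
  then show ?case
    using Suc by (simp add: qpoch_Suc fps_mult_nth_0)
qed simp

lemma qpoch_eq_upto_1:
  assumes "vanishes_below n a"
  shows "eq_upto n (qpoch a b m) 1"
proof -
  have "eq_upto n (1 - a * b ^ k) 1" for k
    using vanishes_below_mult_right[OF assms, of "b ^ k"] by (simp add: eq_upto_def)
  then have "eq_upto n (qpoch a b m) (\<Prod>k<m. 1)"
    unfolding qpoch_def by (intro eq_upto_prod)
  then show ?thesis
    by simp
qed

lemma qpoch_eq_upto_qpoch:
  assumes b0: "b $ 0 = 0" and "n \<le> m"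
  shows "eq_upto n (qpoch a b m) (qpoch a b n)"
proof -
  have "qpoch a b m = qpoch a b n * qpoch (a * b ^ n) b (m - n)"
    using qpoch_add[of a b n "m - n"] assms by simp
  moreover have "eq_upto n (qpoch (a * b ^ n) b (m - n)) 1"
    by (intro qpoch_eq_upto_1 vanishes_below_mult_left vanishes_below_power_self b0)
  ultimately show ?thesis
    using eq_upto_mult_left[of n _ 1 "qpoch a b n"] by simp
qed

lemma qpoch_inf_eq_upto:
  assumes "b $ 0 = 0"
  shows "eq_upto n (qpoch_inf a b) (qpoch a b n)"
  unfolding qpoch_inf_def by (intro lim_fps_stabilizing qpoch_eq_upto_qpoch assms)

lemma qpoch_inf_split:
  assumes b0: "b $ 0 = 0"
  shows "qpoch_inf a b = qpoch a b k * qpoch_inf (a * b ^ k) b"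
proof (rule fps_eq_if_eq_upto)
  fix n
  have "eq_upto n (qpoch_inf a b) (qpoch a b (k + n))"
    using eq_upto_mono[OF qpoch_inf_eq_upto[OF b0]] by simp
  also have "qpoch a b (k + n) = qpoch a b k * qpoch (a * b ^ k) b n"
    by (rule qpoch_add)
  also have "eq_upto n \<dots> (qpoch a b k * qpoch_inf (a * b ^ k) b)"
    by (intro eq_upto_mult_left eq_upto_sym[OF qpoch_inf_eq_upto[OF b0]])
  finally show "eq_upto n (qpoch_inf a b) (qpoch a b k * qpoch_inf (a * b ^ k) b)" .
qed

lemma qpoch_inf_unfold:
  assumes "b $ 0 = 0"
  shows "qpoch_inf a b = (1 - a) * qpoch_inf (a * b) b"
  using qpoch_inf_split[OF assms, of a 1] by (simp add: qpoch_def)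

lemma qpoch_inf_nth_0:
  assumes b0: "b $ 0 = 0"
  shows "qpoch_inf a b $ 0 = 1 - a $ 0"
  using qpoch_inf_eq_upto[OF b0, of 1 a] qpoch_nth_0[OF b0, of a 1]
  by (simp add: eq_upto_def)

lemma qpoch_inf_eq_upto_1:
  assumes "b $ 0 = 0" and "vanishes_below n a"
  shows "eq_upto n (qpoch_inf a b) 1"
  using qpoch_inf_eq_upto[OF assms(1), of n a] qpoch_eq_upto_1[OF assms(2), of b n]
  by (rule eq_upto_trans)

section \<open>The q-binomial theorem\<close>

definition qbinom_term :: "ser \<Rightarrow> ser \<Rightarrow> ser \<Rightarrow> nat \<Rightarrow> ser" where
  "qbinom_term a b y m = qpoch a b m * y ^ m / qpoch b b m"

lemma qbinom_term_0 [simp]: "qbinom_term a b y 0 = 1"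
  by (simp add: qbinom_term_def)

lemma qpoch_base_nth_0:
  assumes "b $ 0 = 0"
  shows "qpoch b b m $ 0 = 1"
  using qpoch_nth_0[OF assms] assms by simp

lemma qbinom_term_scale:
  assumes "b $ 0 = 0"
  shows "qbinom_term a b (y * r) m = r ^ m * qbinom_term a b y m"
  using qpoch_base_nth_0[OF assms]
  by (simp add: qbinom_term_def fps_divide_unit power_mult_distrib mult_ac)

lemma qbinom_term_power_base:
  assumes "b $ 0 = 0"
  shows "qbinom_term a b (b ^ Suc m) (Suc n) = (b ^ Suc n) ^ m * qbinom_term a b b (Suc n)"
proof -
  have "(b ^ m) ^ Suc n = (b ^ Suc n) ^ m"
    by (simp only: power_mult[symmetric] mult.commute)
  then show ?thesis
    using qbinom_term_scale[OF assms, of a b "b ^ m" "Suc n"] by (simp only: power_Suc)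
qed

lemma qbinom_term_vanishes_below:
  assumes "b $ 0 = 0" and "vanishes_below j y"
  shows "vanishes_below (j * m) (qbinom_term a b y m)"
  using qpoch_base_nth_0[OF assms(1)] vanishes_below_power[OF assms(2)]
  by (simp add: qbinom_term_def fps_divide_unit vanishes_below_mult_left vanishes_below_mult_right)

lemma qbinom_term_vanishes_below_index:
  assumes "b $ 0 = 0" and "y $ 0 = 0"
  shows "vanishes_below m (qbinom_term a b y m)"
  using qbinom_term_vanishes_below[OF assms(1), of 1 y m a] assms(2)
  by (simp add: eq_upto_def)

lemma qbinom_term_Suc:
  assumes b0: "b $ 0 = 0"
  shows "qbinom_term a b y (Suc n) * (1 - b ^ Suc n) = y * (1 - a * b ^ n) * qbinom_term a b y n"
proof -
  have units: "qpoch b b (Suc n) $ 0 \<noteq> 0" "qpoch b b n $ 0 \<noteq> 0" "(1 - b ^ Suc n) $ 0 \<noteq> 0"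
    using qpoch_base_nth_0[OF b0] b0 by simp_all
  have "qbinom_term a b y (Suc n) = qpoch a b (Suc n) * y ^ Suc n * inverse (qpoch b b (Suc n))"
    using units by (simp add: qbinom_term_def fps_divide_unit)
  also have "\<dots> = y * (1 - a * b ^ n) * (qpoch a b n * y ^ n * inverse (qpoch b b n))
      * inverse (1 - b ^ Suc n)"
    by (simp add: qpoch_Suc fps_inverse_mult mult_ac)
  also have "qpoch a b n * y ^ n * inverse (qpoch b b n) = qbinom_term a b y n"
    using units by (simp add: qbinom_term_def fps_divide_unit)
  finally show ?thesis
    using inverse_mult_eq_1[OF units(3)] by (simp add: mult.assoc del: power_Suc)
qed

lemma qbinom_partial_sum:
  assumes b0: "b $ 0 = 0"
  shows "(1 - y) * (\<Sum>m<Suc n. qbinom_term a b y m) =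
    (1 - a * y) * (\<Sum>m<Suc n. qbinom_term a b (y * b) m)
      - y * qbinom_term a b y n + a * y * qbinom_term a b (y * b) n"
proof (induction n)
  case (Suc n)
  let ?c = "qbinom_term a b y" and ?d = "qbinom_term a b (y * b)"
  have d: "?d k = b ^ k * ?c k" for k
    by (rule qbinom_term_scale[OF b0])
  have "?c (Suc n) = ?d (Suc n) + y * ?c n - a * y * ?d n"
    using qbinom_term_Suc[OF b0, of a y n] unfolding d by (simp add: algebra_simps)
  with Suc.IH show ?case
    unfolding sum.lessThan_Suc[of _ "Suc n"] by algebra
qed (simp add: algebra_simps)

lemma qbinom_series_functional_eq:
  assumes b0: "b $ 0 = 0" and y0: "y $ 0 = 0"
  shows "(1 - y) * (\<Sum>m. qbinom_term a b y m) = (1 - a * y) * (\<Sum>m. qbinom_term a b (y * b) m)"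
proof (rule fps_eq_if_eq_upto)
  fix n
  have yb0: "(y * b) $ 0 = 0"
    using y0 by simp
  note terms = qbinom_term_vanishes_below_index[OF b0 y0] qbinom_term_vanishes_below_index[OF b0 yb0]
  have "eq_upto n ((1 - y) * (\<Sum>m. qbinom_term a b y m))
      ((1 - y) * (\<Sum>m<Suc n. qbinom_term a b y m))"
    by (intro eq_upto_mult_left suminf_eq_upto terms) simp
  also have "(1 - y) * (\<Sum>m<Suc n. qbinom_term a b y m) =
    (1 - a * y) * (\<Sum>m<Suc n. qbinom_term a b (y * b) m)
      - y * qbinom_term a b y n + a * y * qbinom_term a b (y * b) n"
    by (rule qbinom_partial_sum[OF b0])
  also have "eq_upto n \<dots> ((1 - a * y) * (\<Sum>m<Suc n. qbinom_term a b (y * b) m))"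
    using eq_upto_add[OF eq_upto_diff[OF eq_upto_refl], of n "y * qbinom_term a b y n" 0
        "a * y * qbinom_term a b (y * b) n" 0]
    by (simp add: vanishes_below_mult_left terms)
  also have "eq_upto n \<dots> ((1 - a * y) * (\<Sum>m. qbinom_term a b (y * b) m))"
    by (intro eq_upto_mult_left eq_upto_sym[OF suminf_eq_upto] terms) simp
  finally show "eq_upto n ((1 - y) * (\<Sum>m. qbinom_term a b y m))
      ((1 - a * y) * (\<Sum>m. qbinom_term a b (y * b) m))" .
qed

lemma qbinom_product_functional_eq:
  assumes b0: "b $ 0 = 0" and y0: "y $ 0 = 0"
  shows "(1 - y) * (qpoch_inf (a * y) b / qpoch_inf y b) =
    (1 - a * y) * (qpoch_inf (a * (y * b)) b / qpoch_inf (y * b) b)"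
proof -
  have units: "qpoch_inf y b $ 0 \<noteq> 0" "qpoch_inf (y * b) b $ 0 \<noteq> 0" "(1 - y) $ 0 \<noteq> 0"
    using y0 b0 by (simp_all add: qpoch_inf_nth_0)
  have "(1 - y) * (qpoch_inf (a * y) b / qpoch_inf y b) =
      (1 - a * y) * qpoch_inf (a * (y * b)) b * ((1 - y) * inverse (qpoch_inf y b))"
    using units(1) qpoch_inf_unfold[OF b0, of "a * y"]
    by (simp add: fps_divide_unit mult_ac)
  also have "(1 - y) * inverse (qpoch_inf y b) = inverse (qpoch_inf (y * b) b)"
    using units qpoch_inf_unfold[OF b0, of y]
    by (simp add: fps_inverse_mult mult.assoc[symmetric] inverse_mult_eq_1')
  finally show ?thesis
    using units(2) by (simp add: fps_divide_unit mult_ac)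
qed

lemma fps_eq_0_if_recurrence:
  fixes d u v :: "nat \<Rightarrow> 'a::field fps"
  assumes rec: "\<And>k. u k * d k = v k * d (Suc k)"
    and u0: "\<And>k. u k $ 0 \<noteq> 0"
    and d: "\<And>k. vanishes_below k (d k)"
  shows "d 0 = 0"
proof (rule fps_eq_if_eq_upto)
  fix n
  have step: "vanishes_below n (d j)" if "vanishes_below n (d (Suc j))" for j
  proof -
    have "d j = inverse (u j) * (u j * d j)"
      using u0[of j] by (simp add: mult.assoc[symmetric] inverse_mult_eq_1)
    also have "\<dots> = (inverse (u j) * v j) * d (Suc j)"
      by (simp add: rec mult.assoc)
    finally have "d j = (inverse (u j) * v j) * d (Suc j)" .
    then show ?thesis
      using vanishes_below_mult_left[OF that, of "inverse (u j) * v j"] by (simp only:)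
  qed
  have "vanishes_below n (d (n - i))" if "i \<le> n" for i
    using that
  proof (induction i)
    case (Suc i)
    then show ?case
      using step[of "n - Suc i"] by (simp add: Suc_diff_Suc)
  qed (use d in simp)
  from this[of n] show "eq_upto n (d 0) 0"
    by simp
qed

lemma qbinom_series_eq_upto_1:
  assumes b0: "b $ 0 = 0" and y0: "y $ 0 = 0" and y: "vanishes_below j y"
  shows "eq_upto j (\<Sum>m. qbinom_term a b y m) 1"
proof -
  have "vanishes_below m (qbinom_term a b y (Suc m))" for m
    by (rule eq_upto_mono[OF qbinom_term_vanishes_below_index[OF b0 y0]]) simp
  moreover have "vanishes_below j (qbinom_term a b y (Suc m))" for m
    using eq_upto_mono[OF qbinom_term_vanishes_below[OF b0 y, of "Suc m" a]] by simp
  ultimately have "vanishes_below j (\<Sum>m. qbinom_term a b y (Suc m))"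
    by (rule suminf_vanishes_below)
  then show ?thesis
    using suminf_fps_split_head[OF qbinom_term_vanishes_below_index[OF b0 y0]]
    by (simp add: eq_upto_def)
qed

lemma qbinom_product_eq_upto_1:
  assumes b0: "b $ 0 = 0" and y: "vanishes_below j y"
  shows "eq_upto j (qpoch_inf (a * y) b / qpoch_inf y b) 1"
proof (cases "j = 0")
  case False
  then have "y $ 0 = 0"
    using y by (simp add: eq_upto_def)
  then have "eq_upto j (qpoch_inf (a * y) b / qpoch_inf y b) (1 / 1)"
    using b0 by (intro eq_upto_divide qpoch_inf_eq_upto_1 vanishes_below_mult_left y)
      (simp_all add: qpoch_inf_nth_0)
  then show ?thesis
    by simp
qed (simp add: eq_upto_def)

theorem q_binomial:
  assumes b0: "b $ 0 = 0" and x0: "x $ 0 = 0"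
  shows "(\<Sum>m. qbinom_term a b x m) = qpoch_inf (a * x) b / qpoch_inf x b"
proof -
  define y where "y k = x * b ^ k" for k
  have y0: "y k $ 0 = 0" for k
    using x0 by (simp add: y_def)
  have y_Suc: "y k * b = y (Suc k)" for k
    by (simp add: y_def mult_ac)
  have y_vanishes: "vanishes_below k (y k)" for k
    unfolding y_def by (intro vanishes_below_mult_left vanishes_below_power_self b0)
  define d where "d k = (\<Sum>m. qbinom_term a b (y k) m) - qpoch_inf (a * y k) b / qpoch_inf (y k) b" for k
  have "d 0 = 0"
  proof (rule fps_eq_0_if_recurrence)
    show "(1 - y k) * d k = (1 - a * y k) * d (Suc k)" for k
      unfolding d_def right_diff_distrib y_Suc[symmetric]
      by (simp only: qbinom_series_functional_eq[OF b0 y0] qbinom_product_functional_eq[OF b0 y0])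
    show "(1 - y k) $ 0 \<noteq> 0" for k
      using y0[of k] by simp
    show "vanishes_below k (d k)" for k
      using eq_upto_diff[OF qbinom_series_eq_upto_1[OF b0 y0 y_vanishes]
          qbinom_product_eq_upto_1[OF b0 y_vanishes]]
      unfolding d_def by simp
  qed
  then show ?thesis
    by (simp add: d_def y_def)
qed

abbreviation poch2 :: "ser \<Rightarrow> nat \<Rightarrow> ser" where
  "poch2 a n \<equiv> qpoch a (qq ^ 2) n"

abbreviation poch2_inf :: "ser \<Rightarrow> ser" where
  "poch2_inf a \<equiv> qpoch_inf a (qq ^ 2)"

lemma qq_nth_0 [simp]: "qq $ 0 = 0"
  by (simp add: qq_def)

lemma qq_power_nth_0 [simp]: "(qq ^ n) $ 0 = (if n = 0 then 1 else 0)"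
  by (simp add: qq_def)

lemma qq2_nth_0: "(qq ^ 2) $ 0 = 0"
  by simp

lemma qq2_power_nth_0 [simp]: "((qq ^ 2) ^ n) $ 0 = (if n = 0 then 1 else 0)"
  by (simp add: fps_power_zeroth)

lemma vanishes_below_qq_power: "vanishes_below n (qq ^ n)"
  by (simp add: qq_def eq_upto_def)

lemma zz_times_zinv: "zz * zinv = 1"
  by (simp add: zz_def zinv_def fls_X_inv_times_conv_shift flip: fps_const_mult)

lemma neg_qq_zinv_times_zz: "- qq * zinv * zz = - qq"
  using zz_times_zinv by (simp add: mult.assoc mult.commute[of zinv])

lemma poch2_nth_0 [simp]: "poch2 a n $ 0 = (if n = 0 then 1 else 1 - a $ 0)"
  by (simp add: qpoch_nth_0)

lemma poch2_inf_nth_0 [simp]: "poch2_inf a $ 0 = 1 - a $ 0"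
  by (simp add: qpoch_inf_nth_0)

section \<open>Partitions without repeated odd parts\<close>

lemma part_le_sum_mset: "x \<in># p \<Longrightarrow> x \<le> sum_mset (p :: nat multiset)"
  by (induction p) auto

lemma size_le_sum_mset: "(\<forall>x\<in>#p. 0 < x) \<Longrightarrow> size p \<le> sum_mset (p :: nat multiset)"
  by (induction p) auto

lemma finite_partitions: "finite {p. is_partition p n}"
proof (rule finite_subset)
  show "{p. is_partition p n} \<subseteq> (\<Union>s\<le>n. multisets_of_size {1..n} s)"
    using size_le_sum_mset part_le_sum_mset
    by (fastforce simp: is_partition_def multisets_of_size_def Suc_le_eq)
qed auto

definition nro_partitions :: "nat \<Rightarrow> nat multiset set" where
  "nro_partitions n = {p. is_partition p n \<and> no_rep_odd p}"

definition bounded_nro_partitions :: "nat \<Rightarrow> nat \<Rightarrow> nat multiset set" where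
  "bounded_nro_partitions L n = {p \<in> nro_partitions n. \<forall>x\<in>#p. x \<le> L}"

lemma finite_nro_partitions: "finite (nro_partitions n)"
  by (rule finite_subset[OF _ finite_partitions]) (auto simp: nro_partitions_def)

lemma finite_bounded_nro_partitions: "finite (bounded_nro_partitions L n)"
  by (rule finite_subset[OF _ finite_nro_partitions]) (auto simp: bounded_nro_partitions_def)

lemma bounded_nro_partitions_0: "bounded_nro_partitions 0 n = (if n = 0 then {{#}} else {})"
proof -
  have "p = {#}" if "p \<in> bounded_nro_partitions 0 n" for p
    using that by (cases p) (auto simp: bounded_nro_partitions_def nro_partitions_def is_partition_def)
  moreover have "{#} \<in> bounded_nro_partitions 0 n \<longleftrightarrow> n = 0"
    by (auto simp: bounded_nro_partitions_def nro_partitions_def is_partition_def no_rep_odd_def)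
  ultimately show ?thesis
    by auto
qed

lemma bounded_nro_partitions_without:
  assumes "0 < L"
  shows "{p \<in> bounded_nro_partitions L n. L \<notin># p} = bounded_nro_partitions (L - 1) n"
proof -
  have "x \<le> L - 1 \<longleftrightarrow> x \<le> L \<and> x \<noteq> L" for x
    using assms by auto
  then show ?thesis
    unfolding bounded_nro_partitions_def by blast
qed

lemma no_rep_odd_add_mset:
  "no_rep_odd (add_mset L q) \<longleftrightarrow> no_rep_odd q \<and> (odd L \<longrightarrow> L \<notin># q)"
proof -
  have "count (add_mset L q) x \<le> 1 \<longleftrightarrow> count q x \<le> 1 \<and> (x = L \<longrightarrow> count q x = 0)" for x
    by auto
  then show ?thesis
    unfolding no_rep_odd_def not_in_iff by blast
qed

lemma add_mset_in_bounded_nro_partitions: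
  assumes "0 < L" "L \<le> n"
  shows "add_mset L q \<in> bounded_nro_partitions L n \<longleftrightarrow>
    q \<in> bounded_nro_partitions (if even L then L else L - 1) (n - L)"
proof -
  have "x \<le> (if even L then L else L - 1) \<longleftrightarrow> x \<le> L \<and> (odd L \<longrightarrow> x \<noteq> L)" for x
    using assms(1) by auto
  then have "(\<forall>x\<in>#q. x \<le> L) \<and> (odd L \<longrightarrow> L \<notin># q) \<longleftrightarrow>
      (\<forall>x\<in>#q. x \<le> (if even L then L else L - 1))"
    by blast
  then show ?thesis
    using assms no_rep_odd_add_mset[of L q]
    by (auto simp: bounded_nro_partitions_def nro_partitions_def is_partition_def)
qed

lemma bounded_nro_partitions_with:
  assumes "0 < L" "L \<le> n"
  shows "{p \<in> bounded_nro_partitions L n. L \<in># p} =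
    add_mset L ` bounded_nro_partitions (if even L then L else L - 1) (n - L)"
proof -
  have "p \<in> add_mset L ` {q. add_mset L q \<in> bounded_nro_partitions L n}"
    if "p \<in> bounded_nro_partitions L n" "L \<in># p" for p
    using that by (intro image_eqI[of p _ "p - {#L#}"]) simp_all
  then show ?thesis
    using add_mset_in_bounded_nro_partitions[OF assms] by auto
qed

definition bounded_gf :: "nat \<Rightarrow> ser" where
  "bounded_gf L = Abs_fps (\<lambda>n. \<Sum>p\<in>bounded_nro_partitions L n. fls_X_inv ^ size p)"

lemma bounded_gf_0: "bounded_gf 0 = 1"
  by (rule fps_ext) (simp add: bounded_gf_def bounded_nro_partitions_0)

lemma zinv_qq_power_mult_nth:
  "(zinv * qq ^ L * F) $ n = (if L \<le> n then fls_X_inv * F $ (n - L) else 0)"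
proof -
  have "zinv * qq ^ L * F = fps_const fls_X_inv * (fps_X ^ L * F)"
    by (simp add: zinv_def qq_def mult.assoc)
  then show ?thesis
    by (simp only: fps_mult_left_const_nth fps_X_power_mult_nth) simp
qed

lemma bounded_gf_nth_containing:
  assumes L: "0 < L"
  shows "(\<Sum>p\<in>{p \<in> bounded_nro_partitions L n. L \<in># p}. fls_X_inv ^ size p) =
    (zinv * qq ^ L * bounded_gf (if even L then L else L - 1)) $ n"
proof (cases "L \<le> n")
  case True
  have "inj_on (add_mset L) A" for A
    by (simp add: inj_on_def)
  then have reindex: "(\<Sum>p\<in>add_mset L ` A. fls_X_inv ^ size p) =
      fls_X_inv * (\<Sum>p\<in>A. fls_X_inv ^ size p)" for A
    by (simp add: sum.reindex sum_distrib_left)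
  show ?thesis
    unfolding zinv_qq_power_mult_nth if_P[OF True] bounded_nro_partitions_with[OF L True]
      bounded_gf_def fps_nth_Abs_fps by (rule reindex)
next
  case False
  then have empty: "{p \<in> bounded_nro_partitions L n. L \<in># p} = {}"
    by (auto simp: bounded_nro_partitions_def nro_partitions_def is_partition_def
        dest: part_le_sum_mset)
  show ?thesis
    unfolding zinv_qq_power_mult_nth if_not_P[OF False] empty by (rule sum.empty)
qed

lemma bounded_gf_rec:
  assumes L: "0 < L"
  shows "bounded_gf L = bounded_gf (L - 1) + zinv * qq ^ L * bounded_gf (if even L then L else L - 1)"
proof (rule fps_ext)
  fix n
  let ?B = bounded_nro_partitions
  have split: "?B L n = ?B (L - 1) n \<union> {p \<in> ?B L n. L \<in># p}"
    and disjoint: "?B (L - 1) n \<inter> {p \<in> ?B L n. L \<in># p} = {}"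
    using bounded_nro_partitions_without[OF L, of n] by auto
  have "finite {p \<in> ?B L n. L \<in># p}"
    using finite_bounded_nro_partitions[of L n] by simp
  then have "(\<Sum>p\<in>?B L n. fls_X_inv ^ size p) =
      (\<Sum>p\<in>?B (L - 1) n. fls_X_inv ^ size p) + (\<Sum>p\<in>{p \<in> ?B L n. L \<in># p}. fls_X_inv ^ size p)"
    by (subst split, intro sum.union_disjoint finite_bounded_nro_partitions disjoint)
  then show "bounded_gf L $ n =
      (bounded_gf (L - 1) + zinv * qq ^ L * bounded_gf (if even L then L else L - 1)) $ n"
    unfolding fps_add_nth bounded_gf_nth_containing[OF L, symmetric]
    unfolding bounded_gf_def fps_nth_Abs_fps .
qed

lemma bounded_gf_even_step:
  "bounded_gf (2 * j + 2) * (1 - zinv * qq ^ (2 * j + 2)) =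
    bounded_gf (2 * j) * (1 + zinv * qq ^ (2 * j + 1))"
proof -
  have "bounded_gf (2 * j + 2) =
      bounded_gf (2 * j + 1) + zinv * qq ^ (2 * j + 2) * bounded_gf (2 * j + 2)"
    and "bounded_gf (2 * j + 1) = bounded_gf (2 * j) + zinv * qq ^ (2 * j + 1) * bounded_gf (2 * j)"
    using bounded_gf_rec[of "2 * j + 2"] bounded_gf_rec[of "2 * j + 1"] by simp_all
  then show ?thesis
    by (simp add: algebra_simps)
qed

lemma bounded_gf_product:
  "bounded_gf (2 * j) * poch2 (zinv * qq ^ 2) j = poch2 (- qq * zinv) j"
proof (induction j)
  case (Suc j)
  have "zinv * qq ^ 2 * (qq ^ 2) ^ j = zinv * qq ^ (2 * j + 2)"
    and "- qq * zinv * (qq ^ 2) ^ j = - (zinv * qq ^ (2 * j + 1))"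
    unfolding power_mult[symmetric] power_add by (simp_all add: mult_ac)
  then have P: "poch2 (zinv * qq ^ 2) (Suc j) = poch2 (zinv * qq ^ 2) j * (1 - zinv * qq ^ (2 * j + 2))"
    and Q: "poch2 (- qq * zinv) (Suc j) = poch2 (- qq * zinv) j * (1 + zinv * qq ^ (2 * j + 1))"
    by (simp_all add: qpoch_Suc)
  have "bounded_gf (2 * Suc j) * poch2 (zinv * qq ^ 2) (Suc j) =
      (bounded_gf (2 * j + 2) * (1 - zinv * qq ^ (2 * j + 2))) * poch2 (zinv * qq ^ 2) j"
    unfolding P by (simp add: mult_ac)
  also have "\<dots> = (bounded_gf (2 * j) * poch2 (zinv * qq ^ 2) j) * (1 + zinv * qq ^ (2 * j + 1))"
    unfolding bounded_gf_even_step by (simp only: mult_ac)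
  finally show ?case
    unfolding Suc.IH Q .
qed (simp add: bounded_gf_0)

lemma largest_part_le_iff: "largest_part p \<le> L \<longleftrightarrow> (\<forall>x\<in>#p. x \<le> L)"
  by (cases "p = {#}") (auto simp: largest_part_def)

lemma largest_part_le_sum: "largest_part p \<le> sum_mset p"
  by (simp add: largest_part_le_iff part_le_sum_mset)

definition rank_gf :: ser where
  "rank_gf = Abs_fps (\<lambda>n. \<Sum>p\<in>nro_partitions n.
     fls_X ^ ((largest_part p + 1) div 2) * fls_X_inv ^ size p)"

lemma ceiling_half: "\<lceil>real l / 2\<rceil> = int ((l + 1) div 2)"
proof (cases "even l")
  case False
  then obtain k where l: "l = 2 * k + 1"
    using oddE by blast
  have "real l / 2 = real k + 1 / 2"
    using l by simp
  moreover have "\<lceil>real k + 1 / 2\<rceil> = int k + 1"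
    by (rule ceiling_unique) auto
  moreover have "(l + 1) div 2 = k + 1"
    using l by simp
  ultimately show ?thesis
    by (simp only:)
qed auto

lemma fls_nth_X_power_X_inv_power:
  "fls_nth (fls_X ^ c * fls_X_inv ^ s :: rat fls) m = (if m = int c - int s then 1 else 0)"
proof -
  have "fls_X ^ c * fls_X_inv ^ s = fls_shift (int s - int c) (1 :: rat fls)"
    by (simp add: fls_X_power_conv_shift_1 fls_X_inv_power_conv_shift_1 fls_times_both_shifted_simp)
  then show ?thesis
    by auto
qed

lemma rank_gf_coeff: "fls_nth (rank_gf $ n) m = of_nat (N2 m n)"
proof -
  have rank: "M2rank p = int ((largest_part p + 1) div 2) - int (size p)" for p
    unfolding M2rank_def ceiling_half ..
  have "fls_nth (rank_gf $ n) m = (\<Sum>p\<in>nro_partitions n. of_bool (M2rank p = m))"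
    unfolding rank_gf_def fps_nth_Abs_fps fls_nth_sum
    by (intro sum.cong refl) (auto simp: fls_nth_X_power_X_inv_power rank)
  also have "\<dots> = of_nat (card {p \<in> nro_partitions n. M2rank p = m})"
    using finite_nro_partitions by (simp add: Int_def)
  finally show ?thesis
    by (simp add: N2_def nro_partitions_def conj_assoc)
qed

lemma power_eq_power_plus_geometric:
  fixes x :: "'a::comm_ring_1"
  assumes "c \<le> N"
  shows "x ^ c = x ^ N + (1 - x) * (\<Sum>j\<in>{c..<N}. x ^ j)"
  using assms
proof (induction N rule: dec_induct)
  case (step N)
  then have "(\<Sum>j\<in>{c..<Suc N}. x ^ j) = (\<Sum>j\<in>{c..<N}. x ^ j) + x ^ N"
    by simp
  with step.IH show ?case
    by (simp add: algebra_simps)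
qed simp

(* Partial sums of (1 - z) Sum_j z^j G_j, completed by the boundary term z^N G_N (summation by
   parts); they converge although the series itself does not. *)
definition rank_approx :: "nat \<Rightarrow> ser" where
  "rank_approx N = zz ^ N * bounded_gf (2 * N) + (1 - zz) * (\<Sum>j<N. zz ^ j * bounded_gf (2 * j))"

lemma zz_power_mult_nth: "(zz ^ j * f) $ n = fls_X ^ j * f $ n"
  by (simp add: zz_def fps_const_power)

lemma one_minus_zz_mult_nth: "((1 - zz) * f) $ n = (1 - fls_X) * f $ n"
  by (simp add: zz_def algebra_simps)

lemma bounded_gf_nth: "bounded_gf L $ n = (\<Sum>p\<in>bounded_nro_partitions L n. fls_X_inv ^ size p)"
  by (simp add: bounded_gf_def)

lemma rank_gf_nth_eq_rank_approx:
  assumes "n \<le> 2 * N"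
  shows "rank_gf $ n = rank_approx N $ n"
proof -
  let ?c = "\<lambda>p. (largest_part p + 1) div 2" and ?w = "\<lambda>p. fls_X_inv ^ size p :: rat fls"
    and ?x = "fls_X :: rat fls"
  let ?P = "nro_partitions n"
  have "l \<le> 2 * j \<longleftrightarrow> (l + 1) div 2 \<le> j" for l j :: nat
    by presburger
  then have bounded: "bounded_nro_partitions (2 * j) n = {p \<in> ?P. ?c p \<le> j}" for j
    unfolding bounded_nro_partitions_def largest_part_le_iff[symmetric] by simp
  have c_le: "?c p \<le> N" if "p \<in> ?P" for p
    using largest_part_le_sum[of p] that assms
    by (auto simp: nro_partitions_def is_partition_def)
  have geometric: "?x ^ ?c p = ?x ^ N + (1 - ?x) * (\<Sum>j\<in>{j \<in> {..<N}. ?c p \<le> j}. ?x ^ j)"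
    if "p \<in> ?P" for p
  proof -
    have "{?c p..<N} = {j \<in> {..<N}. ?c p \<le> j}"
      by auto
    then show ?thesis
      using power_eq_power_plus_geometric[OF c_le[OF that], of ?x] by simp
  qed
  let ?S = "\<lambda>p. \<Sum>j\<in>{j \<in> {..<N}. ?c p \<le> j}. ?x ^ j"
  have "rank_gf $ n = (\<Sum>p\<in>?P. (?x ^ N + (1 - ?x) * ?S p) * ?w p)"
    unfolding rank_gf_def fps_nth_Abs_fps by (rule sum.cong[OF refl]) (simp only: geometric)
  also have "\<dots> = ?x ^ N * (\<Sum>p\<in>?P. ?w p) + (1 - ?x) * (\<Sum>p\<in>?P. ?S p * ?w p)"
    by (simp only: distrib_right sum.distrib mult.assoc sum_distrib_left[symmetric])
  also have "(\<Sum>p\<in>?P. ?S p * ?w p) = (\<Sum>j<N. ?x ^ j * (\<Sum>p\<in>{p \<in> ?P. ?c p \<le> j}. ?w p))"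
    using sum.swap_restrict[OF finite_nro_partitions finite_lessThan[of N],
        where g = "\<lambda>p j. ?x ^ j * ?w p" and R = "\<lambda>p j. ?c p \<le> j"]
    by (simp add: sum_distrib_left sum_distrib_right)
  also have "?x ^ N * (\<Sum>p\<in>?P. ?w p) +
      (1 - ?x) * (\<Sum>j<N. ?x ^ j * (\<Sum>p\<in>{p \<in> ?P. ?c p \<le> j}. ?w p)) = rank_approx N $ n"
  proof -
    have "{p \<in> ?P. ?c p \<le> N} = ?P"
      using c_le by auto
    then show ?thesis
      unfolding rank_approx_def fps_add_nth zz_power_mult_nth one_minus_zz_mult_nth fps_sum_nth
        bounded_gf_nth bounded by simp
  qed
  finally show ?thesis .
qed

section \<open>Heine's transformation of S2bar\<close>

definition S2bar_term :: "nat \<Rightarrow> ser" where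
  "S2bar_term k = (qq ^ 2) ^ k * poch2_inf (qq ^ 2 * (qq ^ 2) ^ k) * poch2_inf (- qq * (qq ^ 2) ^ k)
      / (poch2_inf (zz * (qq ^ 2) ^ k) * poch2_inf (zinv * (qq ^ 2) ^ k))"

lemma S2bar_eq_suminf: "S2bar = (\<Sum>n. S2bar_term (Suc n))"
proof -
  have powers: "qq ^ (2 * k + 2) = qq ^ 2 * (qq ^ 2) ^ k" "qq ^ (2 * k + 1) = qq * (qq ^ 2) ^ k" for k
    by (simp_all only: power_add power_mult power_one_right mult.commute[of "(qq ^ 2) ^ k"])
  show ?thesis
    unfolding S2bar_def S2bar_term_def Let_def powers power_mult mult_minus_left ..
qed

lemma S2bar_term_vanishes_below:
  assumes "0 < k"
  shows "vanishes_below (2 * k) (S2bar_term k)"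
  using vanishes_below_qq_power[of "2 * k"] assms
  by (simp add: S2bar_term_def fps_divide_unit fps_mult_nth_0 power_mult mult.assoc
      vanishes_below_mult_right)

definition kappa :: ser where
  "kappa = poch2_inf (qq ^ 2) / poch2_inf (zinv * qq ^ 2)"

abbreviation heine_coeff :: "nat \<Rightarrow> ser" where
  "heine_coeff m \<equiv> qbinom_term (- qq * zinv) (qq ^ 2) zz m"

definition heine_double_term :: "nat \<Rightarrow> nat \<Rightarrow> ser" where
  "heine_double_term n m = qbinom_term zinv (qq ^ 2) ((qq ^ 2) ^ Suc m) (Suc n) * heine_coeff m"

definition heine_row :: "nat \<Rightarrow> ser" where
  "heine_row m = kappa * heine_coeff m *
     (poch2_inf (zinv * (qq ^ 2) ^ Suc m) / poch2_inf ((qq ^ 2) ^ Suc m) - 1)"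

lemma vanishes_below_qq2_power: "vanishes_below (2 * k) ((qq ^ 2) ^ k)"
  using vanishes_below_qq_power[of "2 * k"] by (simp add: power_mult)

lemma heine_double_term_vanishes_below: "vanishes_below (n + m) (heine_double_term n m)"
proof -
  have "vanishes_below (2 * Suc m * Suc n) (qbinom_term zinv (qq ^ 2) ((qq ^ 2) ^ Suc m) (Suc n))"
    by (intro qbinom_term_vanishes_below vanishes_below_qq2_power) simp
  then have "vanishes_below (n + m) (qbinom_term zinv (qq ^ 2) ((qq ^ 2) ^ Suc m) (Suc n))"
    by (rule eq_upto_mono) (simp add: algebra_simps)
  then show ?thesis
    unfolding heine_double_term_def by (rule vanishes_below_mult_right)
qed

lemma S2bar_term_eq_kappa:
  assumes "0 < k"
  shows "(1 - zz) * (1 - zinv) * S2bar_term k = (1 - zz) * kappa *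
    (qbinom_term zinv (qq ^ 2) (qq ^ 2) k *
      (poch2_inf (- qq * (qq ^ 2) ^ k) / poch2_inf (zz * (qq ^ 2) ^ k)))"
proof -
  define P where "P = (qq ^ 2) ^ k"
  have P0: "P $ 0 = 0"
    using assms by (simp add: P_def)
  have r1: "(1 - zinv) * poch2_inf (zinv * qq ^ 2) = poch2 zinv k * poch2_inf (zinv * P)"
    using qpoch_inf_split[of "qq ^ 2" zinv k] qpoch_inf_unfold[of "qq ^ 2" zinv] by (simp add: P_def)
  have r2: "poch2_inf (qq ^ 2) = poch2 (qq ^ 2) k * poch2_inf (qq ^ 2 * P)"
    using qpoch_inf_split[of "qq ^ 2" "qq ^ 2" k] by (simp add: P_def)
  have units: "(poch2_inf (zz * P) * poch2_inf (zinv * P)) $ 0 \<noteq> 0"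
    "poch2_inf (zinv * qq ^ 2) $ 0 \<noteq> 0" "poch2 (qq ^ 2) k $ 0 \<noteq> 0" "poch2_inf (zz * P) $ 0 \<noteq> 0"
    using P0 by (simp_all add: fps_mult_nth_0)
  have inverses: "inverse (poch2_inf (zz * P)) * poch2_inf (zz * P) = 1"
    "inverse (poch2_inf (zinv * P)) * poch2_inf (zinv * P) = 1"
    "inverse (poch2_inf (zinv * qq ^ 2)) * poch2_inf (zinv * qq ^ 2) = 1"
    "inverse (poch2 (qq ^ 2) k) * poch2 (qq ^ 2) k = 1"
    using P0 by (simp_all add: inverse_mult_eq_1 fps_mult_nth_0)
  show ?thesis
    unfolding S2bar_term_def kappa_def qbinom_term_def P_def[symmetric]
      fps_divide_unit[OF units(1)] fps_divide_unit[OF units(2)] fps_divide_unit[OF units(3)]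
      fps_divide_unit[OF units(4)] fps_inverse_mult
    using r1 r2 inverses by algebra
qed

lemma S2bar_term_eq_suminf:
  "(1 - zz) * (1 - zinv) * S2bar_term (Suc n) = (1 - zz) * kappa * (\<Sum>m. heine_double_term n m)"
proof -
  let ?P = "(qq ^ 2) ^ Suc n"
  have terms: "vanishes_below m (?P ^ m * heine_coeff m)" for m
    using vanishes_below_mult_right[OF vanishes_below_power_self[of ?P m]] by simp
  let ?Q = "qbinom_term zinv (qq ^ 2) (qq ^ 2) (Suc n)"
  have "(\<Sum>m. heine_double_term n m) = (\<Sum>m. ?Q * (?P ^ m * heine_coeff m))"
    unfolding heine_double_term_def qbinom_term_power_base[OF qq2_nth_0] by (simp only: mult_ac)
  also have "\<dots> = ?Q * (\<Sum>m. ?P ^ m * heine_coeff m)"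
    by (rule suminf_fps_mult_left[OF terms, symmetric])
  also have "(\<Sum>m. ?P ^ m * heine_coeff m) = (\<Sum>m. qbinom_term (- qq * zinv) (qq ^ 2) (zz * ?P) m)"
    unfolding qbinom_term_scale[OF qq2_nth_0] ..
  also have "(\<Sum>m. qbinom_term (- qq * zinv) (qq ^ 2) (zz * ?P) m) =
      poch2_inf (- qq * ?P) / poch2_inf (zz * ?P)"
  proof -
    have a: "- qq * zinv * (zz * ?P) = - qq * ?P"
      by (simp only: mult.assoc[symmetric] neg_qq_zinv_times_zz)
    have "(zz * ?P) $ 0 = 0"
      by (simp add: fps_mult_nth_0)
    from q_binomial[OF qq2_nth_0 this, of "- qq * zinv"] show ?thesis
      by (simp only: a)
  qed
  finally show ?thesis
    using S2bar_term_eq_kappa[of "Suc n"] by simp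
qed

lemma heine_double_term_row:
  "(\<Sum>n. heine_double_term n m) =
    heine_coeff m * (poch2_inf (zinv * (qq ^ 2) ^ Suc m) / poch2_inf ((qq ^ 2) ^ Suc m) - 1)"
proof -
  let ?Y = "(qq ^ 2) ^ Suc m"
  have Y0: "?Y $ 0 = 0"
    by simp
  note terms = qbinom_term_vanishes_below_index[OF qq2_nth_0 Y0, where a = zinv]
  have "vanishes_below n (qbinom_term zinv (qq ^ 2) ?Y (Suc n))" for n
    by (rule eq_upto_mono[OF terms]) simp
  then have "(\<Sum>n. heine_double_term n m) = heine_coeff m * (\<Sum>n. qbinom_term zinv (qq ^ 2) ?Y (Suc n))"
    unfolding heine_double_term_def mult.commute[of _ "heine_coeff m"]
    by (rule suminf_fps_mult_left[symmetric])
  also have "(\<Sum>n. qbinom_term zinv (qq ^ 2) ?Y (Suc n)) = (\<Sum>n. qbinom_term zinv (qq ^ 2) ?Y n) - 1"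
    using suminf_fps_split_head[OF terms] by simp
  also have "(\<Sum>n. qbinom_term zinv (qq ^ 2) ?Y n) = poch2_inf (zinv * ?Y) / poch2_inf ?Y"
    by (rule q_binomial[OF qq2_nth_0 Y0])
  finally show ?thesis .
qed

lemma heine_coeff_ratio_vanishes_below:
  "vanishes_below m
    (heine_coeff m * (poch2_inf (zinv * (qq ^ 2) ^ Suc m) / poch2_inf ((qq ^ 2) ^ Suc m) - 1))"
proof -
  let ?Y = "(qq ^ 2) ^ Suc m"
  have "eq_upto m (poch2_inf (zinv * ?Y) / poch2_inf ?Y) 1"
    using qbinom_product_eq_upto_1[OF qq2_nth_0 vanishes_below_qq2_power, of "Suc m" zinv]
    by (rule eq_upto_mono) simp
  then show ?thesis
    by (intro vanishes_below_mult_left) (simp add: eq_upto_def)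
qed

lemma heine_row_vanishes_below: "vanishes_below m (heine_row m)"
  unfolding heine_row_def mult.assoc
  by (rule vanishes_below_mult_left[OF heine_coeff_ratio_vanishes_below])

theorem S2bar_eq_suminf_heine_row: "(1 - zz) * (1 - zinv) * S2bar = (1 - zz) * (\<Sum>m. heine_row m)"
proof -
  have terms: "vanishes_below n (S2bar_term (Suc n))" for n
    using eq_upto_mono[OF S2bar_term_vanishes_below[of "Suc n"], of n] by simp
  have "vanishes_below m (heine_double_term n m)" "vanishes_below n (heine_double_term n m)" for n m
    by (rule eq_upto_mono[OF heine_double_term_vanishes_below], simp)+
  then have cols: "vanishes_below n (\<Sum>m. heine_double_term n m)" for n
    by (rule suminf_vanishes_below)
  have "(1 - zz) * (1 - zinv) * S2bar = (\<Sum>n. (1 - zz) * (1 - zinv) * S2bar_term (Suc n))"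
    unfolding S2bar_eq_suminf by (rule suminf_fps_mult_left[OF terms])
  also have "\<dots> = (\<Sum>n. (1 - zz) * kappa * (\<Sum>m. heine_double_term n m))"
    by (simp only: S2bar_term_eq_suminf)
  also have "\<dots> = (1 - zz) * kappa * (\<Sum>n. \<Sum>m. heine_double_term n m)"
    by (rule suminf_fps_mult_left[OF cols, symmetric])
  also have "(\<Sum>n. \<Sum>m. heine_double_term n m) = (\<Sum>m. \<Sum>n. heine_double_term n m)"
    by (rule suminf_fps_swap[OF heine_double_term_vanishes_below])
  also have "\<dots> = (\<Sum>m. heine_coeff m *
      (poch2_inf (zinv * (qq ^ 2) ^ Suc m) / poch2_inf ((qq ^ 2) ^ Suc m) - 1))"
    unfolding heine_double_term_row ..
  also have "(1 - zz) * kappa * \<dots> = (1 - zz) * (\<Sum>m. heine_row m)"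
  proof -
    have "kappa * (\<Sum>m. heine_coeff m *
        (poch2_inf (zinv * (qq ^ 2) ^ Suc m) / poch2_inf ((qq ^ 2) ^ Suc m) - 1)) = (\<Sum>m. heine_row m)"
      unfolding heine_row_def mult.assoc
      by (rule suminf_fps_mult_left[OF heine_coeff_ratio_vanishes_below])
    then show ?thesis
      by (simp only: mult.assoc)
  qed
  finally show ?thesis .
qed

section \<open>Comparison with the rank generating function\<close>

lemma heine_row_eq: "heine_row m = zz ^ m * bounded_gf (2 * m) - kappa * heine_coeff m"
proof -
  let ?Y = "(qq ^ 2) ^ Suc m"
  have r1: "poch2_inf (qq ^ 2) = poch2 (qq ^ 2) m * poch2_inf ?Y"
    using qpoch_inf_split[OF qq2_nth_0, of "qq ^ 2" m] by simp
  have r2: "poch2_inf (zinv * qq ^ 2) = poch2 (zinv * qq ^ 2) m * poch2_inf (zinv * ?Y)"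
    using qpoch_inf_split[OF qq2_nth_0, of "zinv * qq ^ 2" m] by (simp add: mult.assoc)
  have units: "poch2_inf (zinv * qq ^ 2) $ 0 \<noteq> 0" "poch2 (qq ^ 2) m $ 0 \<noteq> 0" "poch2_inf ?Y $ 0 \<noteq> 0"
    by (simp_all add: fps_mult_nth_0 del: power_Suc)
  have inverses: "inverse (poch2_inf (zinv * qq ^ 2)) * poch2_inf (zinv * qq ^ 2) = 1"
    "inverse (poch2 (qq ^ 2) m) * poch2 (qq ^ 2) m = 1" "inverse (poch2_inf ?Y) * poch2_inf ?Y = 1"
    by (simp_all add: inverse_mult_eq_1 fps_mult_nth_0 del: power_Suc)
  have product: "kappa * (poch2 (- qq * zinv) m / poch2 (qq ^ 2) m) *
      (poch2_inf (zinv * ?Y) / poch2_inf ?Y) = bounded_gf (2 * m)"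
    unfolding kappa_def
      fps_divide_unit[OF units(1)] fps_divide_unit[OF units(2)] fps_divide_unit[OF units(3)]
    using r1 r2 inverses bounded_gf_product[of m] by algebra
  have "heine_coeff m = zz ^ m * (poch2 (- qq * zinv) m / poch2 (qq ^ 2) m)"
    unfolding qbinom_term_def fps_divide_unit[OF units(2)] by (simp only: mult_ac)
  then show ?thesis
    unfolding heine_row_def product[symmetric]
    by (simp only: right_diff_distrib mult_1_left mult_1_right mult_ac)
qed

lemma kappa_mult_M2gf:
  "kappa * ((1 + qq) * (poch2_inf (- qq * qq ^ 2) / poch2_inf (zz * qq ^ 2))) = M2gf"
proof -
  have r: "poch2_inf (- qq) = (1 + qq) * poch2_inf (- qq * qq ^ 2)"
    using qpoch_inf_unfold[OF qq2_nth_0, of "- qq"] by simp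
  have units: "poch2_inf (zinv * qq ^ 2) $ 0 \<noteq> 0" "poch2_inf (zz * qq ^ 2) $ 0 \<noteq> 0"
    "(poch2_inf (zz * qq ^ 2) * poch2_inf (zinv * qq ^ 2)) $ 0 \<noteq> 0"
    by (simp_all add: fps_mult_nth_0)
  have inverses: "inverse (poch2_inf (zinv * qq ^ 2)) * poch2_inf (zinv * qq ^ 2) = 1"
    "inverse (poch2_inf (zz * qq ^ 2)) * poch2_inf (zz * qq ^ 2) = 1"
    by (simp_all add: inverse_mult_eq_1 fps_mult_nth_0)
  show ?thesis
    unfolding M2gf_def kappa_def qq_def[symmetric]
      fps_divide_unit[OF units(1)] fps_divide_unit[OF units(2)] fps_divide_unit[OF units(3)]
      fps_inverse_mult
    using r inverses by algebra
qed

lemma bounded_gf_eq_upto_Suc: "eq_upto (Suc L) (bounded_gf (Suc L)) (bounded_gf L)"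
proof -
  let ?X = "bounded_gf (if even (Suc L) then Suc L else L)"
  have "vanishes_below (Suc L) (qq ^ Suc L * ?X)"
    by (rule vanishes_below_mult_right[OF vanishes_below_qq_power])
  then have "vanishes_below (Suc L) (zinv * qq ^ Suc L * ?X)"
    unfolding mult.assoc by (rule vanishes_below_mult_left)
  then have "eq_upto (Suc L) (bounded_gf L + zinv * qq ^ Suc L * ?X) (bounded_gf L + 0)"
    by (rule eq_upto_add[OF eq_upto_refl])
  moreover have "bounded_gf (Suc L) = bounded_gf L + zinv * qq ^ Suc L * ?X"
    using bounded_gf_rec[of "Suc L"] by (simp only: diff_Suc_1 zero_less_Suc simp_thms)
  ultimately show ?thesis
    by simp
qed

lemma bounded_gf_eq_upto_Suc_Suc: "eq_upto n (bounded_gf (2 * Suc n)) (bounded_gf (2 * n))"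
proof -
  have "eq_upto n (bounded_gf (Suc (Suc (2 * n)))) (bounded_gf (Suc (2 * n)))"
    by (rule eq_upto_mono[OF bounded_gf_eq_upto_Suc]) simp
  also have "eq_upto n (bounded_gf (Suc (2 * n))) (bounded_gf (2 * n))"
    by (rule eq_upto_mono[OF bounded_gf_eq_upto_Suc]) simp
  finally show ?thesis
    by simp
qed

lemma kappa_heine_coeff_eq_upto:
  "eq_upto n (kappa * zz * heine_coeff n) (zz ^ Suc n * bounded_gf (2 * Suc n))"
proof -
  have "eq_upto n (kappa * heine_coeff n) (zz ^ n * bounded_gf (2 * n))"
    using heine_row_vanishes_below[of n] unfolding heine_row_eq by (simp add: eq_upto_def)
  also have "eq_upto n \<dots> (zz ^ n * bounded_gf (2 * Suc n))"
    by (rule eq_upto_mult_left[OF eq_upto_sym[OF bounded_gf_eq_upto_Suc_Suc]])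
  finally have "eq_upto n (zz * (kappa * heine_coeff n)) (zz * (zz ^ n * bounded_gf (2 * Suc n)))"
    by (rule eq_upto_mult_left)
  then show ?thesis
    by (simp only: mult_ac power_Suc)
qed

lemma heine_coeff_partial_sum:
  "(1 - zz) * (\<Sum>m<Suc n. heine_coeff m) =
    (1 + qq) * (\<Sum>m<Suc n. qbinom_term (- qq * zinv) (qq ^ 2) (zz * qq ^ 2) m)
      - zz * heine_coeff n - qq * qbinom_term (- qq * zinv) (qq ^ 2) (zz * qq ^ 2) n"
  using qbinom_partial_sum[OF qq2_nth_0, where y = zz and n = n and a = "- qq * zinv"]
  unfolding neg_qq_zinv_times_zz by (simp add: mult.commute[of zz])

lemma shifted_heine_partial_sum_eq_upto:
  "eq_upto n (\<Sum>m<Suc n. qbinom_term (- qq * zinv) (qq ^ 2) (zz * qq ^ 2) m)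
    (poch2_inf (- qq * qq ^ 2) / poch2_inf (zz * qq ^ 2))"
proof -
  have zq0: "(zz * qq ^ 2) $ 0 = 0"
    by (simp add: fps_mult_nth_0)
  have "- qq * zinv * (zz * qq ^ 2) = - qq * qq ^ 2"
    by (simp only: mult.assoc[symmetric] neg_qq_zinv_times_zz)
  then have "(\<Sum>m. qbinom_term (- qq * zinv) (qq ^ 2) (zz * qq ^ 2) m) =
      poch2_inf (- qq * qq ^ 2) / poch2_inf (zz * qq ^ 2)"
    using q_binomial[OF qq2_nth_0 zq0, of "- qq * zinv"] by (simp only:)
  moreover have "eq_upto n (\<Sum>m<Suc n. qbinom_term (- qq * zinv) (qq ^ 2) (zz * qq ^ 2) m)
      (\<Sum>m. qbinom_term (- qq * zinv) (qq ^ 2) (zz * qq ^ 2) m)"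
    by (rule eq_upto_sym[OF suminf_eq_upto[OF qbinom_term_vanishes_below_index[OF qq2_nth_0 zq0]]])
      simp
  ultimately show ?thesis
    by simp
qed

lemma M2gf_plus_heine_rows_eq_upto:
  "eq_upto n (M2gf + (1 - zz) * (\<Sum>m. heine_row m)) (rank_approx (Suc n))"
proof -
  let ?d = "qbinom_term (- qq * zinv) (qq ^ 2) (zz * qq ^ 2)"
  define SB where "SB = (\<Sum>m<Suc n. zz ^ m * bounded_gf (2 * m))"
  have rows: "(\<Sum>m<Suc n. heine_row m) = SB - kappa * (\<Sum>m<Suc n. heine_coeff m)"
    unfolding SB_def heine_row_eq sum_subtractf sum_distrib_left ..
  have "eq_upto n (M2gf + (1 - zz) * (\<Sum>m. heine_row m)) (M2gf + (1 - zz) * (\<Sum>m<Suc n. heine_row m))"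
    by (intro eq_upto_add eq_upto_refl eq_upto_mult_left suminf_eq_upto heine_row_vanishes_below) simp
  also have "M2gf + (1 - zz) * (\<Sum>m<Suc n. heine_row m) =
      M2gf + (1 - zz) * SB - kappa * ((1 + qq) * (\<Sum>m<Suc n. ?d m))
        + kappa * zz * heine_coeff n + kappa * qq * ?d n"
    unfolding rows using heine_coeff_partial_sum[of n] by algebra
  also have "eq_upto n \<dots> (M2gf + (1 - zz) * SB
      - kappa * ((1 + qq) * (poch2_inf (- qq * qq ^ 2) / poch2_inf (zz * qq ^ 2)))
        + zz ^ Suc n * bounded_gf (2 * Suc n) + 0)"
    by (intro eq_upto_add eq_upto_diff eq_upto_refl eq_upto_mult_left shifted_heine_partial_sum_eq_upto
        kappa_heine_coeff_eq_upto vanishes_below_mult_left qbinom_term_vanishes_below_index qq2_nth_0)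
      (simp add: fps_mult_nth_0)
  also have "\<dots> = rank_approx (Suc n)"
    unfolding rank_approx_def SB_def kappa_mult_M2gf by simp
  finally show ?thesis .
qed

lemma rank_gf_eq: "rank_gf = M2gf + (1 - zz) * (\<Sum>m. heine_row m)"
proof (rule fps_eq_if_eq_upto)
  fix n
  have "eq_upto n rank_gf (rank_approx (Suc n))"
    by (simp add: eq_upto_def rank_gf_nth_eq_rank_approx)
  also have "eq_upto n \<dots> (M2gf + (1 - zz) * (\<Sum>m. heine_row m))"
    by (rule eq_upto_sym[OF M2gf_plus_heine_rows_eq_upto])
  finally show "eq_upto n rank_gf (M2gf + (1 - zz) * (\<Sum>m. heine_row m))" .
qed

theorem theorem2p2:
  "\<forall>n m. fls_nth (fps_nth ((1 - zz) * (1 - zinv) * S2bar) n) m = of_nat (N2 m n) - M2 m n"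
proof (intro allI)
  fix n m
  have "(1 - zz) * (1 - zinv) * S2bar = rank_gf - M2gf"
    unfolding S2bar_eq_suminf_heine_row rank_gf_eq by simp
  then show "fls_nth (fps_nth ((1 - zz) * (1 - zinv) * S2bar) n) m = of_nat (N2 m n) - M2 m n"
    by (simp add: rank_gf_coeff M2_def)
qed

end
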